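(* Let $\alpha\in(1,\infty)\setminus\mathbb{N}$ and let $M_{0,\alpha}(X^n,P)=\sum_{x\in\mathcal{X}}p_x^{\alpha}I(F_x(X^n)=0)$. Then $$\sup_P E\big[(M_{0,\alpha}(X^n,P))^2\big]\le_n O\big(1/n^{2(\alpha-1)}\big),$$ the supremum being over all discrete distributions $P$.
   Context: $P$ is a discrete probability distribution on a countable alphabet $\mathcal{X}$, $p_x=P(x)$, and $X^n=(X_1,\ldots,X_n)$ are i.i.d. samples from $P$. $F_x(X^n)=\sum_{i=1}^n I(X_i=x)$ is the number of occurrences of $x$ in $X^n$, and $I(\cdot)$ is the indicator. For nonnegative sequences, $a_n\le_n b_n$ means $a_n\le b_n+o(b_n)$ as $n\to\infty$. *)

theory Defs
  imports "HOL-Probability.Probability"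
begin

definition iid_samples :: "nat \<Rightarrow> 'a pmf \<Rightarrow> (nat \<Rightarrow> 'a) pmf" where
  "iid_samples n P = Pi_pmf {..<n} undefined (\<lambda>_. P)"

definition occ :: "nat \<Rightarrow> (nat \<Rightarrow> 'a) \<Rightarrow> 'a \<Rightarrow> nat" where
  "occ n xs x = card {i \<in> {..<n}. xs i = x}"

definition M0 :: "real \<Rightarrow> nat \<Rightarrow> 'a pmf \<Rightarrow> (nat \<Rightarrow> 'a) \<Rightarrow> real" where
  "M0 \<alpha> n P xs = (\<Sum>\<^sub>\<infinity>x\<in>UNIV. pmf P x powr \<alpha> * (if occ n xs x = 0 then 1 else 0))"

end

theory Submission
  imports Defs
begin

text \<open>
  With \<open>\<gamma> = 2(\<alpha> - 1)\<close> and \<open>U\<^sub>x = I(F\<^sub>x = 0)\<close>, write \<open>M\<^sub>0 = \<Sum>\<^sub>x w\<^sub>x b\<^sub>x\<close> with weights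
  \<open>w\<^sub>x = p\<^sub>x U\<^sub>x\<close> of total mass at most 1 and \<open>b\<^sub>x = p\<^sub>x powr (\<alpha> - 1)\<close>. Jensen's inequality gives
  \<open>M\<^sub>0\<^sup>2 \<le> \<Sum>\<^sub>x w\<^sub>x b\<^sub>x\<^sup>2 = \<Sum>\<^sub>x p\<^sub>x powr (\<gamma> + 1) U\<^sub>x\<close>. Since \<open>P(F\<^sub>x = 0) = (1 - p\<^sub>x)\<^sup>n\<close>, taking expectations
  yields \<open>E[M\<^sub>0\<^sup>2] \<le> \<Sum>\<^sub>x p\<^sub>x \<cdot> p\<^sub>x powr \<gamma> (1 - p\<^sub>x)\<^sup>n\<close>, and uniformly in \<open>p\<close> we have
  \<open>p powr \<gamma> (1 - p)\<^sup>n \<le> p powr \<gamma> exp (-n p) \<le> (\<gamma>/n) powr \<gamma>\<close>; hence \<open>E[M\<^sub>0\<^sup>2] \<le> (\<gamma>/n) powr \<gamma>\<close> for every \<open>P\<close>.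
\<close>

lemma powr_le_powr_self_mult_exp:
  fixes t g :: real
  assumes "t \<ge> 0" "g > 0"
  shows "t powr g \<le> g powr g * exp t"
proof -
  have "t / g \<le> exp (t / g)" using exp_ge_add_one_self[of "t / g"] by linarith
  hence "(t / g) powr g \<le> exp (t / g) powr g"
    using assms by (intro powr_mono2) auto
  also have "\<dots> = exp t" using assms by (simp add: powr_def)
  finally show ?thesis using assms by (simp add: powr_divide field_simps)
qed

lemma powr_mult_one_minus_power_le:
  fixes p g :: real
  assumes "0 \<le> p" "p \<le> 1" "g > 0" "n > 0"
  shows "p powr g * (1 - p) ^ n \<le> (g / n) powr g"
proof -
  have "(1 - p) ^ n \<le> exp (- p) ^ n"
    using assms exp_ge_add_one_self[of "- p"] by (intro power_mono) auto
  also have "\<dots> = exp (- (n * p))" by (simp add: exp_of_nat_mult[symmetric])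
  finally have decay: "(1 - p) ^ n \<le> exp (- (n * p))" .
  have "p powr g = (n * p) powr g / n powr g"
    using assms by (simp add: powr_mult)
  also have "\<dots> \<le> g powr g * exp (n * p) / n powr g"
    using assms by (intro divide_right_mono powr_le_powr_self_mult_exp) auto
  finally have "p powr g * (1 - p) ^ n \<le> (g powr g * exp (n * p) / n powr g) * exp (- (n * p))"
    using decay assms by (intro mult_mono) auto
  also have "\<dots> = (g / n) powr g"
    using assms by (simp add: exp_minus powr_divide field_simps)
  finally show ?thesis .
qed

lemma powr_add_one:
  fixes p a :: real
  assumes "0 \<le> p" "a > 0"
  shows "p powr (a + 1) = p * p powr a"
  using assms by (cases "p = 0") (auto simp: powr_add)

lemma pmf_summable_on: "pmf P summable_on A"
  using abs_summable_equivalent abs_summable_summable pmf_abs_summable by blast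

lemma infsum_pmf_UNIV: "(\<Sum>\<^sub>\<infinity>x\<in>UNIV. pmf P x) = 1"
  by (metis infsetsum_infsum[OF pmf_abs_summable] infsetsum_pmf_eq_1[of P UNIV] subset_UNIV)

lemma summable_on_le_pmf:
  fixes f :: "'a \<Rightarrow> real"
  assumes "\<And>x. 0 \<le> f x" "\<And>x. f x \<le> c * pmf P x"
  shows "f summable_on UNIV"
  using assms
  by (intro summable_on_comparison_test[OF summable_on_cmult_right[OF pmf_summable_on]]) auto

text \<open>Jensen's inequality: sum the AM-GM bound \<open>b m \<le> (b\<^sup>2 + m\<^sup>2)/2\<close>, where \<open>m = \<Sum> w b\<close>,
  against \<open>w\<close>.\<close>
lemma infsum_weighted_square_le:
  fixes w b :: "'a \<Rightarrow> real"
  assumes w_nonneg: "\<And>x. 0 \<le> w x" and w_sum: "w summable_on A" "infsum w A \<le> 1"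
    and wb_sum: "(\<lambda>x. w x * b x) summable_on A"
    and wb2_sum: "(\<lambda>x. w x * (b x)\<^sup>2) summable_on A"
  shows "(\<Sum>\<^sub>\<infinity>x\<in>A. w x * b x)\<^sup>2 \<le> (\<Sum>\<^sub>\<infinity>x\<in>A. w x * (b x)\<^sup>2)"
proof -
  define m where "m = (\<Sum>\<^sub>\<infinity>x\<in>A. w x * b x)"
  define G where "G = (\<Sum>\<^sub>\<infinity>x\<in>A. w x * (b x)\<^sup>2)"
  have sum1: "(\<lambda>x. (1/2) * (w x * (b x)\<^sup>2)) summable_on A"
    using wb2_sum by (rule summable_on_cmult_right)
  have sum2: "(\<lambda>x. (m * m / 2) * w x) summable_on A"
    using w_sum(1) by (rule summable_on_cmult_right)
  have "m * m = (\<Sum>\<^sub>\<infinity>x\<in>A. w x * b x * m)"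
    unfolding m_def by (rule infsum_cmult_left'[symmetric])
  also have "\<dots> \<le> (\<Sum>\<^sub>\<infinity>x\<in>A. (1/2) * (w x * (b x)\<^sup>2) + (m * m / 2) * w x)"
  proof (rule infsum_mono)
    show "(\<lambda>x. w x * b x * m) summable_on A" using wb_sum by (rule summable_on_cmult_left)
    show "(\<lambda>x. (1/2) * (w x * (b x)\<^sup>2) + (m * m / 2) * w x) summable_on A"
      using sum1 sum2 by (rule summable_on_add)
    fix x
    have "b x * m \<le> ((b x)\<^sup>2 + m * m) / 2"
      using sum_squares_ge_zero[of "b x - m" 0] by (simp add: power2_eq_square algebra_simps)
    hence "w x * (b x * m) \<le> w x * (((b x)\<^sup>2 + m * m) / 2)"
      using w_nonneg[of x] by (intro mult_left_mono) auto
    thus "w x * b x * m \<le> (1/2) * (w x * (b x)\<^sup>2) + (m * m / 2) * w x"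
      by (simp add: algebra_simps add_divide_distrib)
  qed
  also have "\<dots> = G / 2 + (m * m / 2) * infsum w A"
    unfolding infsum_add[OF sum1 sum2] infsum_cmult_right' G_def by simp
  also have "\<dots> \<le> G / 2 + m * m / 2"
    using w_sum(2) by (intro add_left_mono) (simp add: mult_left_le)
  finally show ?thesis unfolding m_def G_def by (simp add: power2_eq_square)
qed

lemma M0_square_le:
  fixes \<alpha> :: real
  assumes "\<alpha> > 1"
  shows "(M0 \<alpha> n P xs)\<^sup>2 \<le> (\<Sum>\<^sub>\<infinity>x\<in>UNIV. pmf P x powr (2 * \<alpha> - 1) * (if occ n xs x = 0 then 1 else 0))"
proof -
  define I where "I x = (if occ n xs x = 0 then 1 else 0 :: real)" for x
  define w where "w x = pmf P x * I x" for x
  define b where "b x = pmf P x powr (\<alpha> - 1)" for x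
  have w_bounds: "0 \<le> w x" "w x \<le> pmf P x" for x
    unfolding w_def I_def by auto
  have b_bounds: "0 \<le> b x" "b x \<le> 1" for x
    unfolding b_def using assms by (auto simp: powr_le1 pmf_le_1)
  have wb: "pmf P x powr \<alpha> * I x = w x * b x" for x
    using powr_add_one[of "pmf P x" "\<alpha> - 1"] assms unfolding w_def b_def by simp
  have wb2: "pmf P x powr (2 * \<alpha> - 1) * I x = w x * (b x)\<^sup>2" for x
  proof -
    have "(b x)\<^sup>2 = pmf P x powr (2 * \<alpha> - 2)"
      unfolding b_def by (simp add: power2_eq_square powr_add[symmetric])
    moreover have "pmf P x powr (2 * \<alpha> - 1) = pmf P x * pmf P x powr (2 * \<alpha> - 2)"
      using powr_add_one[of "pmf P x" "2 * \<alpha> - 2"] assms by simp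
    ultimately show ?thesis unfolding w_def by simp
  qed
  have bounded_by_w: "0 \<le> w x * c \<and> w x * c \<le> 1 * pmf P x" if "0 \<le> c" "c \<le> 1" for x c
    using w_bounds[of x] that by (auto intro: order_trans[OF mult_right_le_one_le])
  have w_sum: "w summable_on UNIV"
    using w_bounds by (intro summable_on_le_pmf[where c = 1 and P = P]) auto
  have "infsum w UNIV \<le> infsum (pmf P) UNIV"
    using w_bounds by (intro infsum_mono w_sum pmf_summable_on)
  hence "infsum w UNIV \<le> 1" by (simp add: infsum_pmf_UNIV)
  moreover have "(\<lambda>x. w x * b x) summable_on UNIV"
    using bounded_by_w[OF b_bounds] by (intro summable_on_le_pmf[where c = 1 and P = P]) auto
  moreover have "(\<lambda>x. w x * (b x)\<^sup>2) summable_on UNIV"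
    using bounded_by_w b_bounds by (intro summable_on_le_pmf[where c = 1 and P = P]) (auto simp: power_le_one)
  ultimately have "(\<Sum>\<^sub>\<infinity>x\<in>UNIV. w x * b x)\<^sup>2 \<le> (\<Sum>\<^sub>\<infinity>x\<in>UNIV. w x * (b x)\<^sup>2)"
    using w_bounds(1) w_sum by (intro infsum_weighted_square_le)
  thus ?thesis unfolding M0_def I_def[symmetric] wb wb2 .
qed

lemma nn_integral_infsum_swap:
  fixes g :: "'b \<Rightarrow> 'a :: countable \<Rightarrow> real"
  assumes "sigma_finite_measure M"
    and meas: "\<And>x. (\<lambda>y. g y x) \<in> borel_measurable M"
    and nonneg: "\<And>y x. 0 \<le> g y x" and summable: "\<And>y. g y summable_on UNIV"
  shows "(\<integral>\<^sup>+y. ennreal (\<Sum>\<^sub>\<infinity>x\<in>UNIV. g y x) \<partial>M)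
           = (\<integral>\<^sup>+x. (\<integral>\<^sup>+y. ennreal (g y x) \<partial>M) \<partial>count_space UNIV)"
proof -
  interpret pair_sigma_finite "count_space UNIV :: 'a measure" M
    using assms(1) by (intro pair_sigma_finite.intro sigma_finite_measure_count_space_countable) auto
  have "ennreal (\<Sum>\<^sub>\<infinity>x\<in>UNIV. g y x) = (\<integral>\<^sup>+x. ennreal (g y x) \<partial>count_space UNIV)" for y
  proof -
    have "Infinite_Sum.abs_summable_on (g y) UNIV"
      using summable[of y] nonneg by (simp add: abs_of_nonneg)
    hence "Infinite_Set_Sum.abs_summable_on (g y) UNIV"
      using abs_summable_equivalent by blast
    thus ?thesis using nonneg by (simp add: nn_integral_conv_infsetsum infsetsum_infsum)
  qed
  moreover have "(\<lambda>(x, y). ennreal (g y x)) \<in> borel_measurable (count_space UNIV \<Otimes>\<^sub>M M)"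
  proof -
    have "(\<lambda>z. ennreal (g (snd z) x)) \<in> borel_measurable (count_space UNIV \<Otimes>\<^sub>M M)" for x
      using meas[of x] by (intro measurable_compose[OF measurable_snd]) simp
    hence "(\<lambda>z. ennreal (g (snd z) (fst z))) \<in> borel_measurable (count_space UNIV \<Otimes>\<^sub>M M)"
      by (rule measurable_compose_countable) (simp add: measurable_fst'')
    thus ?thesis by (simp add: case_prod_beta')
  qed
  ultimately show ?thesis by (simp add: Fubini')
qed

lemma prob_occ_eq_0:
  "measure_pmf.prob (iid_samples n P) {xs. occ n xs x = 0} = (1 - pmf P x) ^ n"
proof -
  have "{xs. occ n xs x = 0} = Pi {..<n} (\<lambda>_. UNIV - {x})"
    by (auto simp: occ_def)
  moreover have "measure_pmf.prob P (UNIV - {x}) = 1 - pmf P x"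
    using measure_pmf.prob_compl[of "{x}" P] by (simp add: measure_pmf_single)
  ultimately show ?thesis unfolding iid_samples_def
    by (simp add: measure_Pi_pmf_Pi)
qed

lemma nn_integral_infsum_unseen:
  fixes f :: "'a :: countable \<Rightarrow> real"
  assumes nonneg: "\<And>x. 0 \<le> f x" and summable: "f summable_on UNIV"
  shows "(\<integral>\<^sup>+xs. ennreal (\<Sum>\<^sub>\<infinity>x\<in>UNIV. f x * (if occ n xs x = 0 then 1 else 0)) \<partial>iid_samples n P)
           = (\<integral>\<^sup>+x. ennreal (f x * (1 - pmf P x) ^ n) \<partial>count_space UNIV)"
proof -
  have "(\<lambda>x. f x * (if occ n xs x = 0 then 1 else 0)) summable_on UNIV" for xs
    using nonneg by (intro summable_on_comparison_test[OF summable]) auto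
  hence "(\<integral>\<^sup>+xs. ennreal (\<Sum>\<^sub>\<infinity>x\<in>UNIV. f x * (if occ n xs x = 0 then 1 else 0)) \<partial>iid_samples n P)
      = (\<integral>\<^sup>+x. (\<integral>\<^sup>+xs. ennreal (f x) * indicator {xs. occ n xs x = 0} xs \<partial>iid_samples n P) \<partial>count_space UNIV)"
    using nonneg prob_space_imp_sigma_finite[OF prob_space_measure_pmf]
    by (subst nn_integral_infsum_swap) (auto simp: indicator_def intro!: nn_integral_cong)
  also have "\<dots> = (\<integral>\<^sup>+x. ennreal (f x * (1 - pmf P x) ^ n) \<partial>count_space UNIV)"
    using nonneg by (simp add: nn_integral_cmult_indicator measure_pmf.emeasure_eq_measure
                               prob_occ_eq_0 ennreal_mult pmf_le_1)
  finally show ?thesis .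
qed

lemma expectation_M0_square_le:
  fixes \<alpha> :: real and P :: "'a :: countable pmf"
  assumes "\<alpha> > 1" "n > 0"
  shows "measure_pmf.expectation (iid_samples n P) (\<lambda>xs. (M0 \<alpha> n P xs)\<^sup>2)
           \<le> (2 * (\<alpha> - 1) / n) powr (2 * (\<alpha> - 1))"
proof -
  define \<gamma> where "\<gamma> = 2 * (\<alpha> - 1)"
  define K where "K = (\<gamma> / n) powr \<gamma>"
  have \<gamma>_pos: "\<gamma> > 0" using assms unfolding \<gamma>_def by simp
  have K_nonneg: "K \<ge> 0" unfolding K_def by simp
  have exponent: "2 * \<alpha> - 1 = \<gamma> + 1" unfolding \<gamma>_def by simp
  have "pmf P x powr (2 * \<alpha> - 1) \<le> pmf P x" for x
    using assms powr_le_one_le[of "pmf P x"] by (cases "pmf P x = 0") (auto simp: pmf_le_1)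
  hence summable: "(\<lambda>x. pmf P x powr (2 * \<alpha> - 1)) summable_on UNIV"
    by (intro summable_on_le_pmf[where c = 1 and P = P]) auto
  have "(\<integral>\<^sup>+xs. ennreal ((M0 \<alpha> n P xs)\<^sup>2) \<partial>iid_samples n P)
      \<le> (\<integral>\<^sup>+xs. ennreal (\<Sum>\<^sub>\<infinity>x\<in>UNIV. pmf P x powr (2 * \<alpha> - 1) * (if occ n xs x = 0 then 1 else 0))
            \<partial>iid_samples n P)"
    using M0_square_le[OF assms(1)] by (intro nn_integral_mono ennreal_leI)
  also have "\<dots> = (\<integral>\<^sup>+x. ennreal (pmf P x powr (2 * \<alpha> - 1) * (1 - pmf P x) ^ n) \<partial>count_space UNIV)"
    using summable by (intro nn_integral_infsum_unseen) auto
  also have "\<dots> \<le> (\<integral>\<^sup>+x. ennreal K * ennreal (pmf P x) \<partial>count_space UNIV)"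
  proof (intro nn_integral_mono)
    fix x
    have "pmf P x powr (2 * \<alpha> - 1) * (1 - pmf P x) ^ n
        = pmf P x * (pmf P x powr \<gamma> * (1 - pmf P x) ^ n)"
      unfolding exponent powr_add_one[OF pmf_nonneg \<gamma>_pos] by (rule mult.assoc)
    also have "\<dots> \<le> pmf P x * K"
      unfolding K_def using \<gamma>_pos assms(2)
      by (intro mult_left_mono powr_mult_one_minus_power_le) (auto simp: pmf_le_1)
    finally show "ennreal (pmf P x powr (2 * \<alpha> - 1) * (1 - pmf P x) ^ n) \<le> ennreal K * ennreal (pmf P x)"
      using K_nonneg by (simp add: ennreal_mult[symmetric] mult.commute ennreal_leI)
  qed
  also have "\<dots> = ennreal K"
    by (simp add: nn_integral_cmult nn_integral_pmf measure_pmf.emeasure_space_1)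
  finally have "(\<integral>\<^sup>+xs. ennreal ((M0 \<alpha> n P xs)\<^sup>2) \<partial>iid_samples n P) \<le> ennreal K" .
  hence "enn2real (\<integral>\<^sup>+xs. ennreal ((M0 \<alpha> n P xs)\<^sup>2) \<partial>iid_samples n P) \<le> enn2real (ennreal K)"
    by (rule enn2real_mono) simp
  thus ?thesis using K_nonneg unfolding K_def \<gamma>_def by (simp add: integral_eq_nn_integral)
qed

theorem lemma3:
  fixes \<alpha> :: real
  assumes "\<alpha> > 1" and "\<alpha> \<notin> \<nat>"
  shows "\<exists>C N. \<forall>n \<ge> N. \<forall>P :: 'a :: countable pmf.
           measure_pmf.expectation (iid_samples n P) (\<lambda>xs. (M0 \<alpha> n P xs)\<^sup>2)
             \<le> C / real n powr (2 * (\<alpha> - 1))"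
proof (intro exI allI impI)
  fix n :: nat and P :: "'a pmf"
  assume "n \<ge> 1"
  with assms(1) show "measure_pmf.expectation (iid_samples n P) (\<lambda>xs. (M0 \<alpha> n P xs)\<^sup>2)
      \<le> (2 * (\<alpha> - 1)) powr (2 * (\<alpha> - 1)) / real n powr (2 * (\<alpha> - 1))"
    using expectation_M0_square_le[of \<alpha> n P] by (simp add: powr_divide)
qed

end
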